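(* Let $0<\Delta<1$, let $\mathcal{X}_\Delta=\{X\in\mathcal{X}:\mu_X(\{x\})<\Delta\text{ for all }x\in X\}$, and define $r_\Delta\colon\mathcal{X}_\Delta\to\mathbb{R}_+$ by $r_\Delta(X)=\int_0^{(\Delta+1)/2}\mathrm{diam}(X;s)\,ds$. Then $r_\Delta$ is continuous on $\mathcal{X}_\Delta$ with respect to the box topology.
   Context: mm-spaces are triples $(X,d_X,\mu_X)$ with $(X,d_X)$ complete separable metric and $\mu_X$ a Borel probability measure, with $X=\operatorname{supp}\mu_X$. $\mathcal{X}$ is the set of their isomorphism classes under measure-preserving isometries of supports. Box distance: $\square(X,Y)$ is the infimum of $\varepsilon\ge0$ such that there exist Borel maps $\varphi,\psi$ from $[0,1)$ pushing Lebesgue measure to $\mu_X,\mu_Y$ and a Borel $I_0$ of measure $\ge1-\varepsilon$ with $|d_X(\varphi(s),\varphi(t))-d_Y(\psi(s),\psi(t))|\le\varepsilon$ on $I_0$. It induces the box topology. Partial diameter: $\mathrm{diam}(X;\alpha)=\inf\{\mathrm{diam}A: A\subset X\text{ Borel},\ \mu_X(A)\ge\alpha\}$. For $X\in\mathcal{X}_\Delta$ one has $0<r_\Delta(X)<\infty$. *)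

theory Defs
  imports "HOL-Probability.Probability"
begin

definition borel_of :: "'a topology \<Rightarrow> 'a measure" where
  "borel_of T = sigma (topspace T) {U. openin T U}"

text \<open>An mm-space is represented by a pair (d, mu): the underlying set is space mu,
  d is the metric and mu the Borel probability measure.\<close>
type_synonym 'a mmspace = "('a \<Rightarrow> 'a \<Rightarrow> real) \<times> 'a measure"

definition mm_space :: "'a mmspace \<Rightarrow> bool" where
  "mm_space X \<longleftrightarrow> (case X of (d, \<mu>) \<Rightarrow>
     Metric_space (space \<mu>) d \<and>
     Metric_space.mcomplete (space \<mu>) d \<and>
     separable_space (Metric_space.mtopology (space \<mu>) d) \<and>
     sets \<mu> = sets (borel_of (Metric_space.mtopology (space \<mu>) d)) \<and>
     prob_space \<mu> \<and>
     \<comment> \<open>the support of mu is the whole space\<close>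
     (\<forall>x\<in>space \<mu>. \<forall>r>0. emeasure \<mu> (Metric_space.mball (space \<mu>) d x r) > 0))"

definition unit_lebesgue :: "real measure" where
  "unit_lebesgue = restrict_space lborel {0..<1}"

definition parameter :: "'a mmspace \<Rightarrow> (real \<Rightarrow> 'a) \<Rightarrow> bool" where
  "parameter X \<phi> \<longleftrightarrow> \<phi> \<in> measurable unit_lebesgue (snd X) \<and>
      distr unit_lebesgue (snd X) \<phi> = snd X"

definition box_dist :: "'a mmspace \<Rightarrow> 'b mmspace \<Rightarrow> real" where
  "box_dist X Y = Inf {\<epsilon>. \<epsilon> \<ge> 0 \<and> (\<exists>\<phi> \<psi> I0. parameter X \<phi> \<and> parameter Y \<psi> \<and>
       I0 \<in> sets unit_lebesgue \<and> measure unit_lebesgue I0 \<ge> 1 - \<epsilon> \<and>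
       (\<forall>s\<in>I0. \<forall>t\<in>I0. \<bar>fst X (\<phi> s) (\<phi> t) - fst Y (\<psi> s) (\<psi> t)\<bar> \<le> \<epsilon>))}"

definition mm_diam :: "'a mmspace \<Rightarrow> 'a set \<Rightarrow> ereal" where
  "mm_diam X A = (if A = {} then 0 else (SUP p\<in>A \<times> A. ereal (fst X (fst p) (snd p))))"

definition partial_diam :: "'a mmspace \<Rightarrow> real \<Rightarrow> ereal" where
  "partial_diam X \<alpha> = (INF A\<in>{A. A \<in> sets (snd X) \<and> measure (snd X) A \<ge> \<alpha>}. mm_diam X A)"

definition mm_space_Delta :: "real \<Rightarrow> 'a mmspace \<Rightarrow> bool" where
  "mm_space_Delta \<Delta> X \<longleftrightarrow> mm_space X \<and> (\<forall>x\<in>space (snd X). measure (snd X) {x} < \<Delta>)"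

definition r_Delta :: "real \<Rightarrow> 'a mmspace \<Rightarrow> real" where
  "r_Delta \<Delta> X = (LBINT s=0..(\<Delta> + 1) / 2. real_of_ereal (partial_diam X s))"

end

theory Submission
  imports Defs
begin

(* A box-distance witness of size e between Y and X transports sets: pull a set A of X back
   along the parameter of X, intersect with the set I on which the two metrics are e-close, push
   it forward along the parameter of Y and take the closure.  This gives
   diam(Y; s) <= diam(X; s + e) + e and symmetrically.  Hence, as box_dist (Y n) X -> 0, the
   monotone functions s |-> diam(Y n; s) converge to s |-> diam(X; s) at its continuity points,
   i.e. almost everywhere, and they are uniformly bounded on [0, (Delta + 1) / 2] because partial
   diameters at masses below 1 are finite; dominated convergence concludes.

   For box_dist to be meaningful at all (it is an infimum, and Inf {} is unspecified) every
   mm-space needs a parameter.  Points are coded by nested countable partitions into cells of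
   small radius around a dense sequence, the cells are laid out as consecutive intervals of
   [0, 1) of the right lengths, and t is sent to the limit of the centres of the cells whose
   intervals contain t. *)

section \<open>Convergence of integrals of monotone functions\<close>

lemma tendsto_of_shifted_bounds:
  fixes f :: "nat \<Rightarrow> real \<Rightarrow> real" and g :: "real \<Rightarrow> real"
  assumes s: "s < b" and cont: "isCont g s"
    and close: "\<And>\<delta>. 0 < \<delta> \<Longrightarrow> \<forall>\<^sub>F n in sequentially. \<forall>s. s + \<delta> < b \<longrightarrow>
                   f n s \<le> g (s + \<delta>) + \<delta> \<and> g s \<le> f n (s + \<delta>) + \<delta>"
  shows "(\<lambda>n. f n s) \<longlonglongrightarrow> g s"
proof (rule LIMSEQ_I)
  fix \<eta> :: real assume "0 < \<eta>"
  then obtain \<delta>' where "0 < \<delta>'" and \<delta>': "\<And>x. dist x s < \<delta>' \<Longrightarrow> dist (g x) (g s) < \<eta> / 2"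
    using cont unfolding continuous_at_eps_delta by (meson half_gt_zero)
  define \<delta> where "\<delta> = min (\<delta>' / 2) (min (\<eta> / 2) ((b - s) / 2))"
  have \<delta>: "0 < \<delta>" "\<delta> < \<delta>'" "\<delta> \<le> \<eta> / 2" "s + \<delta> < b"
    using \<open>0 < \<delta>'\<close> \<open>0 < \<eta>\<close> s by (auto simp: \<delta>_def min_def field_simps)
  have "\<bar>g (s + \<delta>) - g s\<bar> < \<eta> / 2" "\<bar>g (s - \<delta>) - g s\<bar> < \<eta> / 2"
    using \<delta>'[of "s + \<delta>"] \<delta>'[of "s - \<delta>"] \<delta> by (simp_all add: dist_real_def)
  then have above: "g (s + \<delta>) < g s + \<eta> / 2" and below: "g s - \<eta> / 2 < g (s - \<delta>)"
    by arith+
  obtain N where N: "\<And>n s. N \<le> n \<Longrightarrow> s + \<delta> < b \<Longrightarrow> f n s \<le> g (s + \<delta>) + \<delta> \<and> g s \<le> f n (s + \<delta>) + \<delta>"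
    using close[OF \<delta>(1)] unfolding eventually_sequentially by blast
  have "norm (f n s - g s) < \<eta>" if "N \<le> n" for n
    using N[OF that \<delta>(4)] N[OF that, of "s - \<delta>"] \<delta> above below by auto
  then show "\<exists>N. \<forall>n\<ge>N. norm (f n s - g s) < \<eta>" by blast
qed

lemma set_borel_measurable_mono_on:
  fixes f :: "real \<Rightarrow> real"
  assumes "mono_on A f" "A \<in> sets borel"
  shows "set_borel_measurable lborel A f"
proof -
  have "f \<in> borel_measurable (restrict_space lborel A)"
    using borel_measurable_mono_on_fnc[OF assms(1)]
    by (simp add: measurable_cong_sets[OF sets_restrict_space_cong[OF sets_lborel] refl])
  then show ?thesis
    unfolding set_borel_measurable_def using assms(2) by (subst (asm) borel_measurable_restrict_space_iff) auto
qed

text \<open>The bounds give convergence at every continuity point of \<open>g\<close>, hence almost everywhere as \<open>g\<close>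
  is monotone, and at the fixed shift \<open>(b - c) / 2\<close> they dominate all \<open>f n\<close> on \<open>[0, c]\<close>.\<close>
lemma tendsto_interval_integral_of_shifted_bounds:
  fixes f :: "nat \<Rightarrow> real \<Rightarrow> real" and g :: "real \<Rightarrow> real"
  assumes c: "0 \<le> c" "c < b"
    and mono_f: "\<And>n. mono_on {..<b} (f n)" and mono_g: "mono_on {..<b} g"
    and close: "\<And>\<delta>. 0 < \<delta> \<Longrightarrow> \<forall>\<^sub>F n in sequentially. \<forall>s. s + \<delta> < b \<longrightarrow>
                   f n s \<le> g (s + \<delta>) + \<delta> \<and> g s \<le> f n (s + \<delta>) + \<delta>"
  shows "(\<lambda>n. LBINT s=0..c. f n s) \<longlonglongrightarrow> (LBINT s=0..c. g s)"
proof -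
  define \<delta> where "\<delta> = (b - c) / 2"
  have \<delta>: "0 < \<delta>" "c + \<delta> < b" using c by (auto simp: \<delta>_def field_simps)
  obtain N where N: "\<And>n s. N \<le> n \<Longrightarrow> s + \<delta> < b \<Longrightarrow> f n s \<le> g (s + \<delta>) + \<delta> \<and> g s \<le> f n (s + \<delta>) + \<delta>"
    using close[OF \<delta>(1)] unfolding eventually_sequentially by blast
  define B where "B = max \<bar>g (c + \<delta>) + \<delta>\<bar> \<bar>g (- \<delta>) - \<delta>\<bar>"
  have bound: "\<bar>f (n + N) s\<bar> \<le> B" if s: "s \<in> {0..c}" for n s
  proof -
    have "f (n + N) s \<le> g (s + \<delta>) + \<delta>" using N[of "n + N" s] s \<delta> by auto
    also have "\<dots> \<le> g (c + \<delta>) + \<delta>" using mono_onD[OF mono_g] s \<delta> by auto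
    finally have "f (n + N) s \<le> g (c + \<delta>) + \<delta>" .
    moreover have "g (- \<delta>) \<le> g (s - \<delta>)" using mono_onD[OF mono_g] s \<delta> by auto
    moreover have "g (s - \<delta>) \<le> f (n + N) s + \<delta>" using N[of "n + N" "s - \<delta>"] s \<delta> by auto
    ultimately show ?thesis unfolding B_def by linarith
  qed
  have measurable: "set_borel_measurable lborel {0..c} h" if "mono_on {..<b} h" for h :: "real \<Rightarrow> real"
    using c by (intro set_borel_measurable_mono_on mono_on_subset[OF that]) auto
  have "countable {s \<in> {..<b}. \<not> isCont g s}"
    using mono_g by (intro mono_on_ctble_discont_open) auto
  then have "AE s in lborel. s \<notin> {s \<in> {..<b}. \<not> isCont g s}"
    by (intro AE_not_in countable_imp_null_set_lborel)
  then have converges: "AE s in lborel. (\<lambda>n. indicator {0..c} s *\<^sub>R f (n + N) s) \<longlonglongrightarrow> indicator {0..c} s *\<^sub>R g s"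
  proof eventually_elim
    case (elim s)
    show ?case
    proof (cases "s \<in> {0..c}")
      case True
      then have "(\<lambda>n. f n s) \<longlonglongrightarrow> g s"
        using elim c by (intro tendsto_of_shifted_bounds[OF _ _ close]) auto
      then show ?thesis using True LIMSEQ_ignore_initial_segment by auto
    qed simp
  qed
  have "(\<lambda>n. LBINT s:{0..c}. f (n + N) s) \<longlonglongrightarrow> (LBINT s:{0..c}. g s)"
    unfolding set_lebesgue_integral_def
  proof (rule integral_dominated_convergence[where w="\<lambda>s. indicator {0..c} s * B"])
    show "integrable lborel (\<lambda>s. indicator {0..c} s * B)"
      using c by (intro integrable_mult_left integrable_real_indicator) simp_all
    show "AE s in lborel. norm (indicator {0..c} s *\<^sub>R f (n + N) s) \<le> indicator {0..c} s * B" for n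
      using bound by (intro AE_I2) (auto simp: indicator_def)
  qed (use measurable[OF mono_f] measurable[OF mono_g] converges
       in \<open>auto simp: set_borel_measurable_def\<close>)
  moreover have "(LBINT s=0..c. h s) = (LBINT s:{0..c}. h s)" for h :: "real \<Rightarrow> real"
    using interval_integral_Icc[OF c(1)] by (simp add: zero_ereal_def)
  ultimately show ?thesis by (simp add: LIMSEQ_offset[where k=N])
qed

section \<open>Existence of parameters\<close>

lemma space_unit_lebesgue [simp]: "space unit_lebesgue = {0..<1}"
  by (simp add: unit_lebesgue_def space_restrict_space)

lemma sets_unit_lebesgue: "A \<in> sets unit_lebesgue \<longleftrightarrow> A \<subseteq> {0..<1} \<and> A \<in> sets borel"
  unfolding unit_lebesgue_def by (subst sets_restrict_space_iff) auto

lemma emeasure_unit_lebesgue: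
  "A \<subseteq> {0..<1} \<Longrightarrow> A \<in> sets borel \<Longrightarrow> emeasure unit_lebesgue A = emeasure lborel A"
  unfolding unit_lebesgue_def by (subst emeasure_restrict_space) auto

interpretation unit_lebesgue: prob_space unit_lebesgue
  by (rule prob_spaceI) (simp add: emeasure_unit_lebesgue)

definition radius :: "nat \<Rightarrow> real" where
  "radius k = (1 / 2) ^ k"

lemma radius_pos [simp]: "0 < radius k"
  by (simp add: radius_def)

lemma radius_antimono: "k \<le> n \<Longrightarrow> radius n \<le> radius k"
  unfolding radius_def by (rule power_decreasing) auto

lemma radius_less: "0 < e \<Longrightarrow> \<exists>k. radius k < e"
  unfolding radius_def by (rule real_arch_pow_inv) auto

lemma radius_tendsto_0: "radius \<longlonglongrightarrow> 0"
  unfolding radius_def[abs_def] by (rule LIMSEQ_realpow_zero) auto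

lemma Least_Suc_less_eq_iff:
  fixes S :: "nat \<Rightarrow> real"
  assumes mono: "mono S" and "S 0 \<le> t" and ex: "\<exists>j. t < S (Suc j)"
  shows "(LEAST j. t < S (Suc j)) = j \<longleftrightarrow> S j \<le> t \<and> t < S (Suc j)"
proof
  assume least: "(LEAST j. t < S (Suc j)) = j"
  have "S j \<le> t"
  proof (cases j)
    case (Suc i)
    then show ?thesis using not_less_Least[of i "\<lambda>j. t < S (Suc j)"] least by auto
  qed (use \<open>S 0 \<le> t\<close> in simp)
  then show "S j \<le> t \<and> t < S (Suc j)" using LeastI_ex[OF ex] least by simp
next
  assume j: "S j \<le> t \<and> t < S (Suc j)"
  show "(LEAST j. t < S (Suc j)) = j"
  proof (rule Least_equality)
    fix i assume "t < S (Suc i)"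
    show "j \<le> i"
    proof (rule ccontr)
      assume "\<not> j \<le> i"
      then have "S (Suc i) \<le> S j" by (intro monoD[OF mono]) simp
      then show False using j \<open>t < S (Suc i)\<close> by simp
    qed
  qed (use j in simp)
qed

text \<open>Interpretations name \<open>space \<mu>\<close> by a fresh variable \<open>M\<close>: instantiating \<open>M\<close> with
  \<open>space \<mu>\<close> itself turns the simp rule \<open>space_eq\<close> into \<open>space \<mu> = space \<mu>\<close>, on which the
  simplifier loops.\<close>
locale metric_measure_space = Metric_space M d + prob_space \<mu>
  for M :: "'a set" and d and \<mu> :: "'a measure" +
  assumes space_eq [simp]: "space \<mu> = M"
    and sets_eq: "sets \<mu> = sets (borel_of mtopology)"
    and complete: "mcomplete"
    and separable: "separable_space mtopology"

lemma metric_measure_space_if_mm_space: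
  "mm_space (d, \<mu>) \<Longrightarrow> metric_measure_space (space \<mu>) d \<mu>"
  unfolding mm_space_def metric_measure_space_def metric_measure_space_axioms_def by simp

context metric_measure_space
begin

lemma sets_eq_sigma_sets_openin: "sets \<mu> = sigma_sets M {U. openin mtopology U}"
proof -
  have "{U. openin mtopology U} \<subseteq> Pow M" using openin_subset[of mtopology] by auto
  then show ?thesis unfolding sets_eq borel_of_def by (simp add: sets_measure_of)
qed

lemma openin_sets: "openin mtopology U \<Longrightarrow> U \<in> sets \<mu>"
  unfolding sets_eq_sigma_sets_openin by auto

lemma closedin_sets: "closedin mtopology C \<Longrightarrow> C \<in> sets \<mu>"
  using openin_sets[of "M - C"] sets.compl_sets[of "M - C" \<mu>]
  by (simp add: closedin_def double_diff)

lemma M_sets [simp]: "M \<in> sets \<mu>"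
  using sets.top[of \<mu>] by simp

lemma M_nonempty: "M \<noteq> {}"
  using not_empty by simp

definition dense_seq :: "nat \<Rightarrow> 'a" where
  "dense_seq = (SOME a. range a \<subseteq> M \<and> (\<forall>x\<in>M. \<forall>r>0. \<exists>i. d x (a i) < r))"

lemma dense_seq: "range dense_seq \<subseteq> M \<and> (\<forall>x\<in>M. \<forall>r>0. \<exists>i. d x (dense_seq i) < r)"
proof -
  obtain C where C: "countable C" "C \<subseteq> M" "mtopology closure_of C = M"
    using separable unfolding separable_space_def by auto
  then have "C \<noteq> {}" using M_nonempty by auto
  define a where "a = from_nat_into C"
  have range_a: "range a = C"
    using range_from_nat_into[OF \<open>C \<noteq> {}\<close> C(1)] by (simp add: a_def)
  have dense: "\<forall>x\<in>M. \<forall>r>0. \<exists>i. d x (a i) < r"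
  proof (intro ballI allI impI)
    fix x and r :: real assume "x \<in> M" "0 < r"
    then have "x \<in> mtopology closure_of C" using C(3) by simp
    then obtain y where "y \<in> C" "y \<in> mball x r" using \<open>0 < r\<close> unfolding metric_closure_of by auto
    then show "\<exists>i. d x (a i) < r" using range_a by auto
  qed
  have "range a \<subseteq> M" using range_a C(2) by simp
  then have "\<exists>a::nat \<Rightarrow> 'a. range a \<subseteq> M \<and> (\<forall>x\<in>M. \<forall>r>0. \<exists>i. d x (a i) < r)"
    using dense by blast
  then show ?thesis unfolding dense_seq_def by (rule someI_ex)
qed

lemma dense_seq_in [simp]: "dense_seq i \<in> M"
  using dense_seq by auto

definition center_index :: "nat \<Rightarrow> 'a \<Rightarrow> nat" where
  "center_index k x = (LEAST i. d x (dense_seq i) < radius k)"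

lemma dist_center_index: "x \<in> M \<Longrightarrow> d x (dense_seq (center_index k x)) < radius k"
  unfolding center_index_def by (rule LeastI_ex) (use dense_seq in auto)

lemma center_index_eq_iff:
  assumes x: "x \<in> M"
  shows "center_index k x = j \<longleftrightarrow> d x (dense_seq j) < radius k \<and> (\<forall>i<j. \<not> d x (dense_seq i) < radius k)"
proof
  assume "center_index k x = j"
  then show "d x (dense_seq j) < radius k \<and> (\<forall>i<j. \<not> d x (dense_seq i) < radius k)"
    using dist_center_index[OF x, of k] not_less_Least[of _ "\<lambda>i. d x (dense_seq i) < radius k"]
    unfolding center_index_def by blast
next
  assume j: "d x (dense_seq j) < radius k \<and> (\<forall>i<j. \<not> d x (dense_seq i) < radius k)"
  show "center_index k x = j"
    unfolding center_index_def
  proof (rule Least_equality)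
    show "d x (dense_seq j) < radius k" using j by blast
    show "\<And>i. d x (dense_seq i) < radius k \<Longrightarrow> j \<le> i" using j leI by blast
  qed
qed

text \<open>The address of \<open>x\<close> at depth \<open>k\<close> lists its center indices for the radii \<open>radius (k - 1), \<dots>, radius 0\<close>,
  finest first, so that refining a cell conses a new index onto its address.\<close>
definition address :: "nat \<Rightarrow> 'a \<Rightarrow> nat list" where
  "address k x = map (\<lambda>m. center_index m x) (rev [0..<k])"

lemma address_0 [simp]: "address 0 x = []"
  and address_Suc [simp]: "address (Suc k) x = center_index k x # address k x"
  by (auto simp: address_def)

lemma length_address [simp]: "length (address k x) = k"
  by (simp add: address_def)

definition cell :: "nat list \<Rightarrow> 'a set" where
  "cell c = {x\<in>M. address (length c) x = c}"

lemma cell_Nil [simp]: "cell [] = M"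
  by (simp add: cell_def)

lemma cell_Cons: "cell (j # c) = {x \<in> cell c. center_index (length c) x = j}"
  by (auto simp: cell_def)

lemma cell_subset: "cell c \<subseteq> M"
  by (auto simp: cell_def)

lemma in_cell_address: "x \<in> M \<Longrightarrow> x \<in> cell (address k x)"
  by (simp add: cell_def)

lemma center_index_preimage_sets: "{x\<in>M. center_index k x = j} \<in> sets \<mu>"
proof -
  define B where "B i = {x\<in>M. d x (dense_seq i) < radius k}" for i
  have B_eq: "B i = mball (dense_seq i) (radius k)" for i
    by (auto simp: B_def commute[of "dense_seq i"])
  have "x \<in> {x\<in>M. center_index k x = j} \<longleftrightarrow> x \<in> B j - (\<Union>i<j. B i)" for x
    by (cases "x \<in> M") (auto simp: center_index_eq_iff B_def)
  then have "{x\<in>M. center_index k x = j} = B j - (\<Union>i<j. B i)"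
    by blast
  also have "\<dots> \<in> sets \<mu>"
    unfolding B_eq using openin_sets[OF openin_mball] by (intro sets.Diff sets.finite_UN) auto
  finally show ?thesis .
qed

lemma cell_sets [measurable]: "cell c \<in> sets \<mu>"
proof (induction c)
  case (Cons j c)
  have "cell (j # c) = cell c \<inter> {x\<in>M. center_index (length c) x = j}"
    by (auto simp: cell_Cons cell_def)
  also have "\<dots> \<in> sets \<mu>"
    using Cons.IH center_index_preimage_sets by (rule sets.Int)
  finally show ?case .
qed simp

definition cell_mass :: "nat list \<Rightarrow> real" where
  "cell_mass c = measure \<mu> (cell c)"

lemma cell_mass_nonneg: "0 \<le> cell_mass c"
  by (simp add: cell_mass_def)

lemma cell_mass_Nil [simp]: "cell_mass [] = 1"
  using prob_space by (simp add: cell_mass_def)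

lemma cell_mass_sums: "(\<lambda>j. cell_mass (j # c)) sums cell_mass c"
proof -
  have "(\<lambda>j. measure \<mu> (cell (j # c))) sums measure \<mu> (\<Union>j. cell (j # c))"
  proof (rule finite_measure_UNION)
    show "range (\<lambda>j. cell (j # c)) \<subseteq> sets \<mu>" by auto
    show "disjoint_family (\<lambda>j. cell (j # c))" by (auto simp: disjoint_family_on_def cell_Cons)
  qed
  moreover have "(\<Union>j. cell (j # c)) = cell c"
    by (auto simp: cell_Cons)
  ultimately show ?thesis by (simp add: cell_mass_def)
qed

lemma sum_cell_mass_le: "(\<Sum>i<n. cell_mass (i # c)) \<le> cell_mass c"
proof -
  have "(\<Sum>i<n. cell_mass (i # c)) \<le> (\<Sum>i. cell_mass (i # c))"
    by (rule sum_le_suminf[OF sums_summable[OF cell_mass_sums]]) (simp_all add: cell_mass_nonneg)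
  also have "\<dots> = cell_mass c"
    by (rule sums_unique[OF cell_mass_sums, symmetric])
  finally show ?thesis .
qed

text \<open>Cell \<open>c\<close> is laid out as \<open>[cell_start c, cell_start c + cell_mass c)\<close>, its children
  following each other in the order of their first index.\<close>
primrec cell_start :: "nat list \<Rightarrow> real" where
  "cell_start [] = 0"
| "cell_start (j # c) = cell_start c + (\<Sum>i<j. cell_mass (i # c))"

lemma cell_start_Cons_bounds:
  "cell_start c \<le> cell_start (j # c) \<and> cell_start (j # c) + cell_mass (j # c) \<le> cell_start c + cell_mass c"
  using sum_nonneg[of "{..<j}" "\<lambda>i. cell_mass (i # c)"] cell_mass_nonneg sum_cell_mass_le[where n="Suc j" and c=c]
  by simp

lemma cell_start_bounds: "0 \<le> cell_start c \<and> cell_start c + cell_mass c \<le> 1"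
proof (induction c)
  case (Cons j c)
  then show ?case using cell_start_Cons_bounds[of c j] by linarith
qed simp

definition child_index :: "real \<Rightarrow> nat list \<Rightarrow> nat" where
  "child_index t c = (LEAST j. t < cell_start c + (\<Sum>i<Suc j. cell_mass (i # c)))"

primrec interval_address :: "real \<Rightarrow> nat \<Rightarrow> nat list" where
  "interval_address t 0 = []"
| "interval_address t (Suc k) = child_index t (interval_address t k) # interval_address t k"

lemma length_interval_address [simp]: "length (interval_address t k) = k"
  by (induction k) auto

lemma child_index_eq_iff:
  assumes t: "cell_start c \<le> t" "t < cell_start c + cell_mass c"
  shows "child_index t c = j \<longleftrightarrow> cell_start (j # c) \<le> t \<and> t < cell_start (j # c) + cell_mass (j # c)"
proof -
  define S where "S n = cell_start c + (\<Sum>i<n. cell_mass (i # c))" for n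
  have mono_S: "mono S"
    unfolding S_def mono_def using cell_mass_nonneg by (simp add: sum_mono2)
  have "S \<longlonglongrightarrow> cell_start c + cell_mass c"
    unfolding S_def using cell_mass_sums[of c] unfolding sums_def by (intro tendsto_add) auto
  then have "\<forall>\<^sub>F n in sequentially. t < S n"
    using t(2) by (rule order_tendstoD)
  then obtain n where "t < S n"
    by (meson eventually_sequentially order.refl)
  then have "t < S (Suc n)" using monoD[OF mono_S, of n "Suc n"] by simp
  then have "(LEAST j. t < S (Suc j)) = j \<longleftrightarrow> S j \<le> t \<and> t < S (Suc j)"
    using t(1) by (intro Least_Suc_less_eq_iff[OF mono_S]) (auto simp: S_def)
  moreover have "child_index t c = (LEAST j. t < S (Suc j))"
    by (simp add: child_index_def S_def)
  moreover have "S j = cell_start (j # c)" "S (Suc j) = cell_start (j # c) + cell_mass (j # c)"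
    by (simp_all add: S_def)
  ultimately show ?thesis by (simp only:)
qed

lemma child_index_preimage:
  "{t \<in> {cell_start c ..< cell_start c + cell_mass c}. child_index t c = j} =
   {cell_start (j # c) ..< cell_start (j # c) + cell_mass (j # c)}"
proof (rule set_eqI)
  fix t
  show "t \<in> {t \<in> {cell_start c ..< cell_start c + cell_mass c}. child_index t c = j} \<longleftrightarrow>
        t \<in> {cell_start (j # c) ..< cell_start (j # c) + cell_mass (j # c)}"
  proof (cases "t \<in> {cell_start c ..< cell_start c + cell_mass c}")
    case True
    then show ?thesis using child_index_eq_iff[of c t j] by simp
  next
    case False
    then show ?thesis using cell_start_Cons_bounds[of c j] by auto
  qed
qed

lemma interval_address_preimage:
  "{t\<in>{0..<1}. interval_address t k = c} =
     (if length c = k then {cell_start c ..< cell_start c + cell_mass c} else {})"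
proof (induction k arbitrary: c)
  case 0
  then show ?case by (cases c) auto
next
  case (Suc k)
  show ?case
  proof (cases c)
    case (Cons j c')
    have "{t\<in>{0..<1}. interval_address t (Suc k) = j # c'} =
          {t \<in> {t\<in>{0..<1}. interval_address t k = c'}. child_index t c' = j}"
      by auto
    also have "\<dots> = (if length c' = k then
                      {t \<in> {cell_start c' ..< cell_start c' + cell_mass c'}. child_index t c' = j} else {})"
      unfolding Suc.IH by simp
    also have "\<dots> = (if length (j # c') = Suc k then
                      {cell_start (j # c') ..< cell_start (j # c') + cell_mass (j # c')} else {})"
      by (simp only: child_index_preimage length_Cons nat.inject)
    finally show ?thesis unfolding Cons .
  qed simp
qed

lemma interval_address_bounds:
  assumes "t \<in> {0..<1}"
  shows "cell_start (interval_address t k) \<le> t \<and> t < cell_start (interval_address t k) + cell_mass (interval_address t k)"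
proof -
  have "t \<in> {s\<in>{0..<1}. interval_address s k = interval_address t k}" using assms by simp
  then show ?thesis by (simp only: interval_address_preimage) simp
qed

lemma cell_interval_address_nonempty:
  assumes "t \<in> {0..<1}" shows "cell (interval_address t k) \<noteq> {}"
proof
  assume "cell (interval_address t k) = {}"
  then have "cell_mass (interval_address t k) = 0" by (simp add: cell_mass_def)
  then show False using interval_address_bounds[OF assms, of k] by simp
qed

lemma interval_address_vimage:
  "(\<lambda>t. interval_address t k) -` {c} \<inter> space unit_lebesgue =
     (if length c = k then {cell_start c ..< cell_start c + cell_mass c} else {})"
proof -
  have "(\<lambda>t. interval_address t k) -` {c} \<inter> space unit_lebesgue = {t\<in>{0..<1}. interval_address t k = c}"
    by auto
  then show ?thesis by (simp only: interval_address_preimage)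
qed

lemma measurable_interval_address:
  "(\<lambda>t. interval_address t k) \<in> measurable unit_lebesgue (count_space UNIV)"
proof (subst measurable_count_space_eq2_countable, safe)
  fix c
  show "(\<lambda>t. interval_address t k) -` {c} \<inter> space unit_lebesgue \<in> sets unit_lebesgue"
    using cell_start_bounds[of c] unfolding interval_address_vimage by (simp add: sets_unit_lebesgue)
qed simp

lemma address_vimage: "address k -` {c} \<inter> space \<mu> = (if length c = k then cell c else {})"
  by (auto simp: cell_def)

lemma measurable_address: "address k \<in> measurable \<mu> (count_space UNIV)"
proof (subst measurable_count_space_eq2_countable, safe)
  fix c
  show "address k -` {c} \<inter> space \<mu> \<in> sets \<mu>"
    unfolding address_vimage by simp
qed simp

lemma emeasure_interval_address:
  "emeasure unit_lebesgue ((\<lambda>t. interval_address t k) -` S \<inter> space unit_lebesgue) =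
   emeasure \<mu> (address k -` S \<inter> space \<mu>)"
proof -
  have "distr unit_lebesgue (count_space UNIV) (\<lambda>t. interval_address t k) =
        distr \<mu> (count_space UNIV) (address k)"
  proof (rule measure_eqI_countable)
    fix c :: "nat list"
    have "emeasure unit_lebesgue ((\<lambda>t. interval_address t k) -` {c} \<inter> space unit_lebesgue) =
          emeasure \<mu> (address k -` {c} \<inter> space \<mu>)"
    proof (cases "length c = k")
      case True
      have "emeasure unit_lebesgue {cell_start c ..< cell_start c + cell_mass c} =
            emeasure lborel {cell_start c ..< cell_start c + cell_mass c}"
        using cell_start_bounds[of c] by (intro emeasure_unit_lebesgue) auto
      also have "\<dots> = emeasure \<mu> (cell c)"
        using cell_mass_nonneg[of c] by (simp add: cell_mass_def emeasure_eq_measure)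
      finally show ?thesis unfolding interval_address_vimage address_vimage using True by simp
    qed (unfold interval_address_vimage address_vimage, simp)
    then show "emeasure (distr unit_lebesgue (count_space UNIV) (\<lambda>t. interval_address t k)) {c} =
               emeasure (distr \<mu> (count_space UNIV) (address k)) {c}"
      by (simp add: emeasure_distr measurable_interval_address measurable_address)
  qed auto
  then show ?thesis
    using emeasure_distr[OF measurable_interval_address, of S k] emeasure_distr[OF measurable_address, of S k]
    by simp
qed

definition center :: "real \<Rightarrow> nat \<Rightarrow> 'a" where
  "center t k = dense_seq (child_index t (interval_address t k))"

lemma center_in [simp]: "center t k \<in> M"
  by (simp add: center_def)

lemma cell_interval_address_antimono:
  "k \<le> n \<Longrightarrow> cell (interval_address t n) \<subseteq> cell (interval_address t k)"
proof (induction n rule: dec_induct)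
  case (step m)
  have "cell (interval_address t (Suc m)) \<subseteq> cell (interval_address t m)"
    by (auto simp: cell_Cons)
  then show ?case using step.IH by blast
qed simp

lemma dist_center:
  assumes "x \<in> cell (interval_address t (Suc k))"
  shows "d x (center t k) < radius k"
proof -
  have "x \<in> M" "center_index k x = child_index t (interval_address t k)"
    using assms cell_subset by (auto simp: cell_Cons)
  then show ?thesis using dist_center_index[of x k] by (simp add: center_def)
qed

lemma dist_center_center:
  assumes t: "t \<in> {0..<1}" and "k \<le> n"
  shows "d (center t k) (center t n) < radius k + radius n"
proof -
  obtain x where x: "x \<in> cell (interval_address t (Suc n))"
    using cell_interval_address_nonempty[OF t] by blast
  then have x': "x \<in> cell (interval_address t (Suc k))" and "x \<in> M"
    using cell_interval_address_antimono[of "Suc k" "Suc n" t] assms(2) cell_subset by auto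
  then have "d (center t k) (center t n) \<le> d x (center t k) + d x (center t n)"
    using triangle[of "center t k" x "center t n"] commute[of x "center t k"] by simp
  then show ?thesis using dist_center[OF x] dist_center[OF x'] by linarith
qed

lemma MCauchy_center: assumes t: "t \<in> {0..<1}" shows "MCauchy (center t)"
  unfolding MCauchy_def
proof (intro conjI allI impI)
  fix e :: real assume "0 < e"
  then obtain N where N: "radius N < e / 2" using radius_less[of "e / 2"] by auto
  have "d (center t n) (center t n') < e" if "N \<le> n" "N \<le> n'" for n n'
  proof -
    have "d (center t n) (center t n') < radius n + radius n'"
    proof (cases "n \<le> n'")
      case False
      then have "d (center t n') (center t n) < radius n' + radius n"
        by (intro dist_center_center[OF t]) simp
      then show ?thesis by (simp add: commute)
    qed (rule dist_center_center[OF t])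
    also have "\<dots> \<le> radius N + radius N"
      using radius_antimono[OF that(1)] radius_antimono[OF that(2)] by linarith
    finally show ?thesis using N by simp
  qed
  then show "\<exists>N. \<forall>n n'. N \<le> n \<longrightarrow> N \<le> n' \<longrightarrow> d (center t n) (center t n') < e"
    by blast
qed auto

text \<open>Outside \<open>[0, 1)\<close> the value of \<open>param\<close> is irrelevant; it is chosen inside \<open>M\<close>.\<close>
definition param :: "real \<Rightarrow> 'a" where
  "param t = (if t \<in> {0..<1} then (SOME x. limitin mtopology (center t) x sequentially) else dense_seq 0)"

lemma limitin_param: "t \<in> {0..<1} \<Longrightarrow> limitin mtopology (center t) (param t) sequentially"
  using someI_ex[OF complete[unfolded mcomplete_def, rule_format, OF MCauchy_center]]
  by (simp add: param_def)

lemma param_in [simp]: "param t \<in> M"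
proof (cases "t \<in> {0..<1}")
  case True
  then show ?thesis using limitin_param limitin_metric by blast
qed (auto simp: param_def)

lemma dist_center_param: assumes t: "t \<in> {0..<1}" shows "d (center t k) (param t) \<le> radius k"
proof (rule field_le_epsilon)
  fix e :: real assume "0 < e"
  have "\<forall>\<epsilon>>0. \<forall>\<^sub>F n in sequentially. center t n \<in> M \<and> d (center t n) (param t) < \<epsilon>"
    using limitin_param[OF t] unfolding limitin_metric by blast
  then have "\<forall>\<^sub>F n in sequentially. center t n \<in> M \<and> d (center t n) (param t) < e / 2"
    using \<open>0 < e\<close> half_gt_zero by blast
  then have "\<forall>\<^sub>F n in sequentially. d (center t n) (param t) < e / 2"
    by (rule eventually_mono) simp
  moreover have "\<forall>\<^sub>F n in sequentially. radius n < e / 2"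
    using order_tendstoD(2)[OF radius_tendsto_0, of "e / 2"] \<open>0 < e\<close> by simp
  ultimately have "\<forall>\<^sub>F n in sequentially. d (center t n) (param t) < e / 2 \<and> radius n < e / 2 \<and> k \<le> n"
    by (intro eventually_conj eventually_ge_at_top)
  then obtain n where n: "d (center t n) (param t) < e / 2" "radius n < e / 2" "k \<le> n"
    by (auto dest: eventually_happens)
  have "d (center t k) (param t) \<le> d (center t k) (center t n) + d (center t n) (param t)"
    by (intro triangle) auto
  then show "d (center t k) (param t) \<le> radius k + e"
    using dist_center_center[OF t n(3)] n by linarith
qed

lemma dist_param:
  assumes "t \<in> {0..<1}" and x: "x \<in> cell (interval_address t (Suc k))"
  shows "d x (param t) < 2 * radius k"
proof -
  have "x \<in> M" using x cell_subset by blast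
  then have "d x (param t) \<le> d x (center t k) + d (center t k) (param t)"
    by (intro triangle) auto
  then show ?thesis using dist_center[OF x] dist_center_param[OF assms(1), of k] by linarith
qed

lemma measurable_param: "param \<in> measurable unit_lebesgue \<mu>"
proof (rule measurable_sigma_sets[OF sets_eq_sigma_sets_openin])
  show "{U. openin mtopology U} \<subseteq> Pow M" using openin_subset[of mtopology] by auto
  show "param \<in> space unit_lebesgue \<rightarrow> M" by simp
  fix U assume "U \<in> {U. openin mtopology U}"
  then have U: "openin mtopology U" by simp
  define S where "S k = {c. c \<noteq> [] \<and> mball (dense_seq (hd c)) (2 * radius k) \<subseteq> U}" for k
  have eq: "param -` U \<inter> space unit_lebesgue = (\<Union>k. (\<lambda>t. interval_address t (Suc k)) -` S k \<inter> space unit_lebesgue)"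
  proof (intro set_eqI iffI)
    fix t assume "t \<in> param -` U \<inter> space unit_lebesgue"
    then have t: "t \<in> {0..<1}" and "param t \<in> U" by auto
    then obtain r where "0 < r" "mball (param t) r \<subseteq> U" using U unfolding openin_mtopology by blast
    moreover obtain k where "radius k < r / 3" using radius_less[of "r / 3"] \<open>0 < r\<close> by auto
    moreover have "mball (center t k) (2 * radius k) \<subseteq> mball (param t) r"
      using dist_center_param[OF t, of k] \<open>radius k < r / 3\<close> by (intro mball_subset) auto
    ultimately have "mball (center t k) (2 * radius k) \<subseteq> U"
      by blast
    then show "t \<in> (\<Union>k. (\<lambda>t. interval_address t (Suc k)) -` S k \<inter> space unit_lebesgue)"
      using t by (auto simp: S_def center_def)
  next
    fix t assume "t \<in> (\<Union>k. (\<lambda>t. interval_address t (Suc k)) -` S k \<inter> space unit_lebesgue)"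
    then obtain k where t: "t \<in> {0..<1}" and "interval_address t (Suc k) \<in> S k" by auto
    then have "mball (center t k) (2 * radius k) \<subseteq> U"
      by (simp add: S_def center_def)
    moreover have "d (center t k) (param t) < 2 * radius k"
      using dist_center_param[OF t, of k] radius_pos[of k] by linarith
    ultimately show "t \<in> param -` U \<inter> space unit_lebesgue" using t by auto
  qed
  have preimage_sets: "(\<lambda>t. interval_address t (Suc k)) -` S k \<inter> space unit_lebesgue \<in> sets unit_lebesgue" for k
    by (rule measurable_sets[OF measurable_interval_address]) simp
  show "param -` U \<inter> space unit_lebesgue \<in> sets unit_lebesgue"
    unfolding eq by (rule sets.countable_UN'') (simp, rule preimage_sets)
qed

end

context metric_measure_space
begin

definition thickening :: "'a set \<Rightarrow> nat \<Rightarrow> 'a set" where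
  "thickening F k = {x\<in>M. \<exists>y\<in>F. d x y < 2 * radius k}"

lemma thickening_sets: assumes "F \<subseteq> M" shows "thickening F k \<in> sets \<mu>"
proof -
  have "thickening F k = (\<Union>y\<in>F. mball y (2 * radius k))"
  proof (intro set_eqI iffI)
    fix x assume "x \<in> thickening F k"
    then obtain y where "x \<in> M" "y \<in> F" "d x y < 2 * radius k" by (auto simp: thickening_def)
    then show "x \<in> (\<Union>y\<in>F. mball y (2 * radius k))" using assms commute[of x y] by auto
  next
    fix x assume "x \<in> (\<Union>y\<in>F. mball y (2 * radius k))"
    then obtain y where "y \<in> F" "x \<in> mball y (2 * radius k)" by blast
    then show "x \<in> thickening F k" using commute[of y x] by (auto simp: thickening_def)
  qed
  then show ?thesis by (auto intro!: openin_sets openin_Union)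
qed

lemma decseq_thickening: "decseq (thickening F)"
  unfolding decseq_def
proof (intro allI impI subsetI)
  fix m n x assume "m \<le> n" "x \<in> thickening F n"
  then obtain y where "x \<in> M" "y \<in> F" "d x y < 2 * radius n" by (auto simp: thickening_def)
  moreover have "radius n \<le> radius m" using \<open>m \<le> n\<close> by (rule radius_antimono)
  ultimately show "x \<in> thickening F m" by (auto simp: thickening_def intro!: bexI[of _ y])
qed

lemma Inter_thickening: assumes F: "closedin mtopology F" shows "(\<Inter>k. thickening F k) = F"
proof
  show "F \<subseteq> (\<Inter>k. thickening F k)"
  proof
    fix x assume "x \<in> F"
    then have "x \<in> M" using closedin_subset[OF F] by auto
    then show "x \<in> (\<Inter>k. thickening F k)"
      using \<open>x \<in> F\<close> by (auto simp: thickening_def intro!: bexI[of _ x])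
  qed
  show "(\<Inter>k. thickening F k) \<subseteq> F"
  proof
    fix x assume x: "x \<in> (\<Inter>k. thickening F k)"
    then have "x \<in> M" by (auto simp: thickening_def)
    show "x \<in> F"
    proof (rule ccontr)
      assume "x \<notin> F"
      then obtain r where "0 < r" and disj: "disjnt F (mball x r)"
        using F \<open>x \<in> M\<close> unfolding closedin_metric by blast
      obtain k where "radius k < r / 2" using radius_less[of "r / 2"] \<open>0 < r\<close> by auto
      moreover obtain y where "y \<in> F" "d x y < 2 * radius k"
        using x by (auto simp: thickening_def)
      ultimately have "y \<in> mball x r"
        using closedin_subset[OF F] \<open>x \<in> M\<close> by auto
      then show False
        using disj \<open>y \<in> F\<close> by (auto simp: disjnt_def)
    qed
  qed
qed

lemma measure_param_vimage_le_thickening: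
  assumes F: "closedin mtopology F"
  shows "measure unit_lebesgue (param -` F \<inter> space unit_lebesgue) \<le> measure \<mu> (thickening F k)"
proof -
  have FM: "F \<subseteq> M" using closedin_subset[OF F] by simp
  define S where "S = {c. cell c \<subseteq> thickening F k}"
  have "param -` F \<inter> space unit_lebesgue \<subseteq> (\<lambda>t. interval_address t (Suc k)) -` S \<inter> space unit_lebesgue"
  proof
    fix t assume "t \<in> param -` F \<inter> space unit_lebesgue"
    then have t: "t \<in> {0..<1}" and "param t \<in> F" by auto
    have "cell (interval_address t (Suc k)) \<subseteq> thickening F k"
      using dist_param[OF t] cell_subset \<open>param t \<in> F\<close> unfolding thickening_def by blast
    then show "t \<in> (\<lambda>t. interval_address t (Suc k)) -` S \<inter> space unit_lebesgue"
      using t by (simp add: S_def del: interval_address.simps)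
  qed
  then have "emeasure unit_lebesgue (param -` F \<inter> space unit_lebesgue) \<le>
             emeasure unit_lebesgue ((\<lambda>t. interval_address t (Suc k)) -` S \<inter> space unit_lebesgue)"
    by (intro emeasure_mono measurable_sets[OF measurable_interval_address]) auto
  also have "\<dots> = emeasure \<mu> (address (Suc k) -` S \<inter> space \<mu>)"
    by (rule emeasure_interval_address)
  also have "\<dots> \<le> emeasure \<mu> (thickening F k)"
  proof (intro emeasure_mono thickening_sets FM subsetI)
    fix x assume "x \<in> address (Suc k) -` S \<inter> space \<mu>"
    then show "x \<in> thickening F k"
      using in_cell_address[of x "Suc k"] by (auto simp: S_def simp del: address_Suc)
  qed
  finally show ?thesis
    using measurable_sets[OF measurable_param closedin_sets[OF F]] thickening_sets[OF FM]
    by (simp add: unit_lebesgue.emeasure_eq_measure emeasure_eq_measure)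
qed

lemma measure_le_param_vimage_thickening:
  assumes F: "closedin mtopology F"
  shows "measure \<mu> F \<le> measure unit_lebesgue (param -` thickening F k \<inter> space unit_lebesgue)"
proof -
  have FM: "F \<subseteq> M" using closedin_subset[OF F] by simp
  define S where "S = {c. cell c \<inter> F \<noteq> {}}"
  have "emeasure \<mu> F \<le> emeasure \<mu> (address (Suc k) -` S \<inter> space \<mu>)"
  proof (intro emeasure_mono measurable_sets[OF measurable_address] subsetI)
    fix x assume "x \<in> F"
    then show "x \<in> address (Suc k) -` S \<inter> space \<mu>"
      using FM in_cell_address[of x "Suc k"] by (auto simp: S_def simp del: address_Suc)
  qed simp
  also have "\<dots> = emeasure unit_lebesgue ((\<lambda>t. interval_address t (Suc k)) -` S \<inter> space unit_lebesgue)"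
    by (rule emeasure_interval_address[symmetric])
  also have "\<dots> \<le> emeasure unit_lebesgue (param -` thickening F k \<inter> space unit_lebesgue)"
  proof (intro emeasure_mono measurable_sets[OF measurable_param] thickening_sets FM subsetI)
    fix t assume "t \<in> (\<lambda>t. interval_address t (Suc k)) -` S \<inter> space unit_lebesgue"
    then have t: "t \<in> {0..<1}" and "cell (interval_address t (Suc k)) \<inter> F \<noteq> {}"
      by (simp_all add: S_def del: interval_address.simps)
    then obtain y where y: "y \<in> cell (interval_address t (Suc k))" "y \<in> F" by blast
    have "d (param t) y < 2 * radius k"
      using dist_param[OF t y(1)] commute[of "param t"] by simp
    then show "t \<in> param -` thickening F k \<inter> space unit_lebesgue"
      using y(2) t by (auto simp: thickening_def)
  qed
  finally show ?thesis
    using measurable_sets[OF measurable_param thickening_sets[OF FM]] closedin_sets[OF F]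
    by (simp add: unit_lebesgue.emeasure_eq_measure emeasure_eq_measure)
qed

text \<open>Both sides are squeezed between the measures of shrinking thickenings of \<open>F\<close>.\<close>
lemma measure_param_vimage_closedin:
  assumes F: "closedin mtopology F"
  shows "measure unit_lebesgue (param -` F \<inter> space unit_lebesgue) = measure \<mu> F"
proof (rule antisym)
  have FM: "F \<subseteq> M" using closedin_subset[OF F] by simp
  have "(\<lambda>k. measure \<mu> (thickening F k)) \<longlonglongrightarrow> measure \<mu> (\<Inter>k. thickening F k)"
    using thickening_sets[OF FM] decseq_thickening by (intro finite_Lim_measure_decseq) auto
  then show "measure unit_lebesgue (param -` F \<inter> space unit_lebesgue) \<le> measure \<mu> F"
    using measure_param_vimage_le_thickening[OF F] Inter_thickening[OF F]
    by (intro LIMSEQ_le_const) auto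
  have "decseq (\<lambda>k. param -` thickening F k \<inter> space unit_lebesgue)"
    using decseq_thickening[of F] by (auto simp: decseq_def)
  then have "(\<lambda>k. measure unit_lebesgue (param -` thickening F k \<inter> space unit_lebesgue)) \<longlonglongrightarrow>
             measure unit_lebesgue (\<Inter>k. param -` thickening F k \<inter> space unit_lebesgue)"
    using measurable_sets[OF measurable_param thickening_sets[OF FM]]
    by (intro unit_lebesgue.finite_Lim_measure_decseq) auto
  moreover have "(\<Inter>k. param -` thickening F k \<inter> space unit_lebesgue) = param -` F \<inter> space unit_lebesgue"
    using Inter_thickening[OF F] by blast
  ultimately show "measure \<mu> F \<le> measure unit_lebesgue (param -` F \<inter> space unit_lebesgue)"
    using measure_le_param_vimage_thickening[OF F] by (intro LIMSEQ_le_const) auto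
qed

lemma emeasure_param_vimage_openin:
  assumes U: "openin mtopology U"
  shows "emeasure unit_lebesgue (param -` U \<inter> space unit_lebesgue) = emeasure \<mu> U"
proof -
  have UM: "U \<subseteq> M" using openin_subset[OF U] by simp
  have F: "closedin mtopology (M - U)" using U by (simp add: closedin_diff)
  have "param -` U \<inter> space unit_lebesgue = space unit_lebesgue - (param -` (M - U) \<inter> space unit_lebesgue)"
    by auto
  then have "measure unit_lebesgue (param -` U \<inter> space unit_lebesgue) =
             1 - measure unit_lebesgue (param -` (M - U) \<inter> space unit_lebesgue)"
    using unit_lebesgue.prob_compl[OF measurable_sets[OF measurable_param closedin_sets[OF F]]] by simp
  also have "\<dots> = measure \<mu> U"
    using measure_param_vimage_closedin[OF F] prob_compl[OF openin_sets[OF U]] by simp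
  finally show ?thesis
    using measurable_sets[OF measurable_param openin_sets[OF U]] openin_sets[OF U]
    by (simp add: unit_lebesgue.emeasure_eq_measure emeasure_eq_measure)
qed

lemma distr_param: "distr unit_lebesgue \<mu> param = \<mu>"
proof (rule measure_eqI_generator_eq[where E="{U. openin mtopology U}" and \<Omega>=M and A="\<lambda>_. M"])
  show "Int_stable {U. openin mtopology U}" by (auto simp: Int_stable_def openin_Int)
  show "{U. openin mtopology U} \<subseteq> Pow M" using openin_subset[of mtopology] by auto
  show "emeasure (distr unit_lebesgue \<mu> param) U = emeasure \<mu> U" if "U \<in> {U. openin mtopology U}" for U
    using emeasure_param_vimage_openin that openin_sets by (simp add: emeasure_distr[OF measurable_param])
  show "sets (distr unit_lebesgue \<mu> param) = sigma_sets M {U. openin mtopology U}"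
    "sets \<mu> = sigma_sets M {U. openin mtopology U}"
    using sets_eq_sigma_sets_openin by simp_all
  show "emeasure (distr unit_lebesgue \<mu> param) M \<noteq> \<infinity>"
    by (simp add: emeasure_distr[OF measurable_param] unit_lebesgue.emeasure_eq_measure)
qed auto

end

lemma parameter_exists: assumes "mm_space X" shows "\<exists>\<phi>. parameter X \<phi>"
proof -
  obtain d \<mu> where X: "X = (d, \<mu>)" by (cases X)
  define M where "M = space \<mu>"
  interpret metric_measure_space M d \<mu>
    using assms unfolding X M_def by (rule metric_measure_space_if_mm_space)
  have "parameter X param"
    unfolding parameter_def X snd_conv by (rule conjI[OF measurable_param distr_param])
  then show ?thesis by blast
qed

section \<open>Partial diameters under box-distance witnesses\<close>

lemma mm_diam_le:
  assumes "\<And>x y. x \<in> A \<Longrightarrow> y \<in> A \<Longrightarrow> d x y \<le> D" and "0 \<le> D"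
  shows "mm_diam (d, \<mu>) A \<le> ereal D"
  using assms unfolding mm_diam_def by (auto intro!: SUP_least)

lemma mm_diam_ge: "x \<in> A \<Longrightarrow> y \<in> A \<Longrightarrow> ereal (d x y) \<le> mm_diam (d, \<mu>) A"
  unfolding mm_diam_def by (auto intro!: SUP_upper2[of "(x, y)"])

lemma mm_diam_nonneg: assumes "Metric_space M d" shows "0 \<le> mm_diam (d, \<mu>) A"
proof (cases "A = {}")
  case False
  then obtain a where "a \<in> A" by blast
  have "0 \<le> ereal (d a a)" using Metric_space.nonneg[OF assms] by simp
  also have "\<dots> \<le> mm_diam (d, \<mu>) A" using \<open>a \<in> A\<close> \<open>a \<in> A\<close> by (rule mm_diam_ge)
  finally show ?thesis .
qed (simp add: mm_diam_def)

lemma (in Metric_space) mm_diam_closure_of_le: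
  assumes "S \<subseteq> M" and le: "\<And>x y. x \<in> S \<Longrightarrow> y \<in> S \<Longrightarrow> d x y \<le> D" and "0 \<le> D"
  shows "mm_diam (d, \<mu>) (mtopology closure_of S) \<le> ereal D"
proof (rule mm_diam_le[OF _ \<open>0 \<le> D\<close>])
  fix x y assume x: "x \<in> mtopology closure_of S" and y: "y \<in> mtopology closure_of S"
  show "d x y \<le> D"
  proof (rule field_le_epsilon)
    fix e :: real assume "0 < e"
    have "0 < e / 2" using \<open>0 < e\<close> by simp
    then obtain u v where "u \<in> S" "u \<in> mball x (e / 2)" "v \<in> S" "v \<in> mball y (e / 2)"
      using x y unfolding metric_closure_of by blast
    then have u: "u \<in> S" "d x u < e / 2" and v: "v \<in> S" "d y v < e / 2" by auto
    have "x \<in> M" "y \<in> M"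
      using x y closure_of_subset_topspace[of mtopology S] by auto
    moreover have "u \<in> M" "v \<in> M"
      using u(1) v(1) assms(1) by auto
    ultimately have "d x y \<le> d x u + d u v + d v y"
      by (meson add_mono order.trans order.refl triangle)
    then show "d x y \<le> D + e"
      using le[OF u(1) v(1)] u(2) v(2) commute[of v y] by linarith
  qed
qed

lemma partial_diam_mono: "s \<le> s' \<Longrightarrow> partial_diam X s \<le> partial_diam X s'"
  unfolding partial_diam_def by (rule INF_superset_mono) auto

lemma partial_diam_le_mm_diam: "A \<in> sets (snd X) \<Longrightarrow> s \<le> measure (snd X) A \<Longrightarrow> partial_diam X s \<le> mm_diam X A"
  unfolding partial_diam_def by (rule INF_lower) simp

lemma partial_diam_nonneg: assumes "mm_space X" shows "0 \<le> partial_diam X s"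
proof -
  obtain d \<mu> where X: "X = (d, \<mu>)" by (cases X)
  have "Metric_space (space \<mu>) d" using assms unfolding X mm_space_def by simp
  then show ?thesis
    unfolding X partial_diam_def using mm_diam_nonneg by (intro INF_greatest) blast
qed

text \<open>Balls of growing radius exhaust the space, so some bounded ball has mass above \<open>s\<close>.\<close>
lemma partial_diam_less_infinity: assumes "mm_space X" "s < 1" shows "partial_diam X s < \<infinity>"
proof -
  obtain d \<mu> where X: "X = (d, \<mu>)" by (cases X)
  define M where "M = space \<mu>"
  interpret metric_measure_space M d \<mu>
    using assms(1) unfolding X M_def by (rule metric_measure_space_if_mm_space)
  obtain x0 where x0: "x0 \<in> M" using M_nonempty by blast
  define B where "B n = mball x0 (real n)" for n
  have "range B \<subseteq> sets \<mu>" unfolding B_def using openin_sets[OF openin_mball] by blast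
  moreover have "incseq B" unfolding B_def incseq_def by (auto intro!: mball_subset_concentric)
  ultimately have "(\<lambda>n. measure \<mu> (B n)) \<longlonglongrightarrow> measure \<mu> (\<Union>n. B n)"
    by (rule finite_Lim_measure_incseq)
  moreover have "(\<Union>n. B n) = M"
    using x0 reals_Archimedean2 by (fastforce simp: B_def)
  ultimately have "(\<lambda>n. measure \<mu> (B n)) \<longlonglongrightarrow> 1"
    using prob_space by simp
  then obtain n where n: "s \<le> measure \<mu> (B n)"
    using order_tendstoD(1)[OF _ assms(2)] by (metis eventually_sequentially less_imp_le order.refl)
  have "partial_diam (d, \<mu>) s \<le> mm_diam (d, \<mu>) (B n)"
    using n openin_sets[OF openin_mball] by (intro partial_diam_le_mm_diam) (simp_all add: B_def)
  also have "\<dots> \<le> ereal (2 * real n)"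
  proof (rule mm_diam_le)
    fix x y assume "x \<in> B n" "y \<in> B n"
    then have "x \<in> M" "y \<in> M" "d x0 x < real n" "d x0 y < real n" by (auto simp: B_def)
    moreover have "d x y \<le> d x x0 + d x0 y" using calculation x0 by (intro triangle) auto
    ultimately show "d x y \<le> 2 * real n" using commute[of x x0] by linarith
  qed simp
  finally show ?thesis unfolding X by (rule le_less_trans) simp
qed

lemma mono_on_real_of_partial_diam:
  assumes "mm_space X" shows "mono_on {..<1} (\<lambda>s. real_of_ereal (partial_diam X s))"
proof (rule mono_onI)
  fix r s :: real assume "r \<in> {..<1}" "s \<in> {..<1}" "r \<le> s"
  then show "real_of_ereal (partial_diam X r) \<le> real_of_ereal (partial_diam X s)"
    using partial_diam_nonneg[OF assms] partial_diam_less_infinity[OF assms] partial_diam_mono[of r s X]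
    by (intro real_of_ereal_positive_mono) auto
qed

lemma real_of_partial_diam_le:
  assumes "mm_space X" "mm_space Y" "t < 1" "partial_diam X s \<le> partial_diam Y t + ereal \<delta>"
  shows "real_of_ereal (partial_diam X s) \<le> real_of_ereal (partial_diam Y t) + \<delta>"
proof -
  obtain b where b: "partial_diam Y t = ereal b"
    using partial_diam_nonneg[OF assms(2)] partial_diam_less_infinity[OF assms(2,3)]
    by (cases "partial_diam Y t") auto
  have "real_of_ereal (partial_diam X s) \<le> real_of_ereal (ereal (b + \<delta>))"
    using assms(4) b partial_diam_nonneg[OF assms(1)] by (intro real_of_ereal_positive_mono) auto
  then show ?thesis using b by simp
qed

definition box_witness ::
  "'a mmspace \<Rightarrow> 'b mmspace \<Rightarrow> real \<Rightarrow> (real \<Rightarrow> 'a) \<Rightarrow> (real \<Rightarrow> 'b) \<Rightarrow> real set \<Rightarrow> bool" where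
  "box_witness X Y \<epsilon> \<phi> \<psi> I \<longleftrightarrow> parameter X \<phi> \<and> parameter Y \<psi> \<and>
     I \<in> sets unit_lebesgue \<and> measure unit_lebesgue I \<ge> 1 - \<epsilon> \<and>
     (\<forall>s\<in>I. \<forall>t\<in>I. \<bar>fst X (\<phi> s) (\<phi> t) - fst Y (\<psi> s) (\<psi> t)\<bar> \<le> \<epsilon>)"

lemma box_dist_eq_Inf_box_witness:
  "box_dist X Y = Inf {\<epsilon>. \<epsilon> \<ge> 0 \<and> (\<exists>\<phi> \<psi> I. box_witness X Y \<epsilon> \<phi> \<psi> I)}"
  unfolding box_dist_def box_witness_def ..

lemma box_witness_commute: "box_witness X Y \<epsilon> \<phi> \<psi> I \<Longrightarrow> box_witness Y X \<epsilon> \<psi> \<phi> I"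
  unfolding box_witness_def by (simp add: abs_minus_commute)

lemma box_witness_nonneg: assumes "box_witness X Y \<epsilon> \<phi> \<psi> I" shows "0 \<le> \<epsilon>"
proof (cases "I = {}")
  case True
  then show ?thesis using assms by (simp add: box_witness_def)
next
  case False
  then obtain s where "s \<in> I" by blast
  then have "\<bar>fst X (\<phi> s) (\<phi> s) - fst Y (\<psi> s) (\<psi> s)\<bar> \<le> \<epsilon>"
    using assms unfolding box_witness_def by blast
  then show ?thesis by (meson abs_ge_zero order_trans)
qed

lemma box_witness_less:
  assumes "mm_space X" "mm_space Y" "box_dist X Y < \<delta>"
  obtains \<epsilon> \<phi> \<psi> I where "\<epsilon> < \<delta>" "box_witness X Y \<epsilon> \<phi> \<psi> I"
proof -
  define E where "E = {\<epsilon>. \<epsilon> \<ge> 0 \<and> (\<exists>\<phi> \<psi> I. box_witness X Y \<epsilon> \<phi> \<psi> I)}"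
  obtain \<phi> \<psi> where "parameter X \<phi>" "parameter Y \<psi>"
    using parameter_exists[OF assms(1)] parameter_exists[OF assms(2)] by blast
  then have "box_witness X Y 1 \<phi> \<psi> {}"
    by (simp add: box_witness_def)
  then have "1 \<in> E" unfolding E_def by auto
  then obtain \<epsilon> where "\<epsilon> \<in> E" "\<epsilon> < \<delta>"
    using cInf_lessD[of E \<delta>] assms(3) unfolding box_dist_eq_Inf_box_witness E_def by blast
  then show ?thesis using that unfolding E_def by blast
qed

lemma (in prob_space) prob_Int_ge:
  assumes "A \<in> events" "B \<in> events"
  shows "prob A - (1 - prob B) \<le> prob (A \<inter> B)"
proof -
  have "prob A \<le> prob ((A \<inter> B) \<union> (space M - B))"
    using assms sets.sets_into_space by (intro finite_measure_mono) auto
  also have "\<dots> \<le> prob (A \<inter> B) + prob (space M - B)"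
    using assms by (intro measure_Un_le) auto
  finally show ?thesis using prob_compl[OF assms(2)] by simp
qed

lemma measure_parameter_vimage_Int:
  assumes "parameter (d, \<mu>) \<psi>" "A \<in> sets \<mu>" "I \<in> sets unit_lebesgue"
  shows "measure \<mu> A - (1 - measure unit_lebesgue I) \<le> measure unit_lebesgue (\<psi> -` A \<inter> space unit_lebesgue \<inter> I)"
proof -
  have \<psi>: "\<psi> \<in> measurable unit_lebesgue \<mu>" "distr unit_lebesgue \<mu> \<psi> = \<mu>"
    using assms(1) by (auto simp: parameter_def)
  show ?thesis
    using unit_lebesgue.prob_Int_ge[OF measurable_sets[OF \<psi>(1) assms(2)] assms(3)]
      measure_distr[OF \<psi>(1) assms(2)] \<psi>(2) by simp
qed

lemma (in metric_measure_space) closure_image_parameter: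
  assumes "parameter (d, \<mu>) \<phi>" and T: "T \<in> sets unit_lebesgue"
  shows "\<phi> ` T \<subseteq> M" and "mtopology closure_of (\<phi> ` T) \<in> sets \<mu>"
    and "measure unit_lebesgue T \<le> measure \<mu> (mtopology closure_of (\<phi> ` T))"
proof -
  have \<phi>: "\<phi> \<in> measurable unit_lebesgue \<mu>" "distr unit_lebesgue \<mu> \<phi> = \<mu>"
    using assms(1) by (auto simp: parameter_def)
  have T_subset: "T \<subseteq> space unit_lebesgue"
    using T by (rule sets.sets_into_space)
  then show image_subset: "\<phi> ` T \<subseteq> M"
    using measurable_space[OF \<phi>(1)] by auto
  show closure_sets: "mtopology closure_of (\<phi> ` T) \<in> sets \<mu>"
    by (rule closedin_sets[OF closedin_closure_of])
  have "\<phi> ` T \<subseteq> mtopology closure_of (\<phi> ` T)"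
    using image_subset by (intro closure_of_subset) simp
  then have "T \<subseteq> \<phi> -` (mtopology closure_of (\<phi> ` T)) \<inter> space unit_lebesgue"
    using T_subset by blast
  then have "measure unit_lebesgue T \<le> measure unit_lebesgue (\<phi> -` (mtopology closure_of (\<phi> ` T)) \<inter> space unit_lebesgue)"
    using measurable_sets[OF \<phi>(1) closure_sets] by (rule unit_lebesgue.finite_measure_mono)
  also have "\<dots> = measure \<mu> (mtopology closure_of (\<phi> ` T))"
    using measure_distr[OF \<phi>(1) closure_sets] \<phi>(2) by simp
  finally show "measure unit_lebesgue T \<le> measure \<mu> (mtopology closure_of (\<phi> ` T))" .
qed

text \<open>Pull \<open>A\<close> back along \<open>\<psi>\<close>, keep the part inside \<open>I\<close>, and push it forward along \<open>\<phi>\<close>;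
  the closure of the image is measurable and carries mass at least \<open>s\<close>.\<close>
lemma partial_diam_le_mm_diam_box_witness:
  assumes mmX: "mm_space (dX, \<mu>X)" and mmY: "mm_space (dY, \<mu>Y)"
    and w: "box_witness (dX, \<mu>X) (dY, \<mu>Y) \<epsilon> \<phi> \<psi> I"
    and A: "A \<in> sets \<mu>Y" "s + \<epsilon> \<le> measure \<mu>Y A"
  shows "partial_diam (dX, \<mu>X) s \<le> mm_diam (dY, \<mu>Y) A + ereal \<epsilon>"
proof (cases "mm_diam (dY, \<mu>Y) A = \<infinity>")
  case False
  define MX where "MX = space \<mu>X"
  interpret X: metric_measure_space MX dX \<mu>X
    using mmX unfolding MX_def by (rule metric_measure_space_if_mm_space)
  have "Metric_space (space \<mu>Y) dY" using mmY by (simp add: mm_space_def)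
  then have nonneg: "0 \<le> mm_diam (dY, \<mu>Y) A" by (rule mm_diam_nonneg)
  then obtain D where D: "mm_diam (dY, \<mu>Y) A = ereal D"
    using False by (cases "mm_diam (dY, \<mu>Y) A") auto
  have "0 \<le> D" using nonneg D by simp
  have \<phi>: "parameter (dX, \<mu>X) \<phi>" and \<psi>: "parameter (dY, \<mu>Y) \<psi>"
    and I: "I \<in> sets unit_lebesgue" "1 - \<epsilon> \<le> measure unit_lebesgue I"
    and close: "\<And>s t. s \<in> I \<Longrightarrow> t \<in> I \<Longrightarrow> \<bar>dX (\<phi> s) (\<phi> t) - dY (\<psi> s) (\<psi> t)\<bar> \<le> \<epsilon>"
    using w by (auto simp: box_witness_def)
  define T where "T = \<psi> -` A \<inter> space unit_lebesgue \<inter> I"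
  have "\<psi> \<in> measurable unit_lebesgue \<mu>Y" using \<psi> by (simp add: parameter_def)
  then have T_sets: "T \<in> sets unit_lebesgue"
    unfolding T_def using measurable_sets A(1) I(1) by blast
  have "s \<le> measure unit_lebesgue T"
    using measure_parameter_vimage_Int[OF \<psi> A(1) I(1)] A(2) I(2) by (simp add: T_def)
  then have "partial_diam (dX, \<mu>X) s \<le> mm_diam (dX, \<mu>X) (X.mtopology closure_of (\<phi> ` T))"
    using X.closure_image_parameter[OF \<phi> T_sets] by (intro partial_diam_le_mm_diam) auto
  also have "\<dots> \<le> ereal (D + \<epsilon>)"
  proof (rule X.mm_diam_closure_of_le[OF X.closure_image_parameter(1)[OF \<phi> T_sets]])
    show "0 \<le> D + \<epsilon>" using \<open>0 \<le> D\<close> box_witness_nonneg[OF w] by simp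
    fix x y assume "x \<in> \<phi> ` T" "y \<in> \<phi> ` T"
    then obtain s1 s2 where "s1 \<in> T" "s2 \<in> T" and xy: "x = \<phi> s1" "y = \<phi> s2" by blast
    then have "\<psi> s1 \<in> A" "\<psi> s2 \<in> A" "s1 \<in> I" "s2 \<in> I" by (auto simp: T_def)
    then have "dY (\<psi> s1) (\<psi> s2) \<le> D" using mm_diam_ge[of "\<psi> s1" A "\<psi> s2" dY \<mu>Y] D by simp
    then show "dX x y \<le> D + \<epsilon>"
      using close[OF \<open>s1 \<in> I\<close> \<open>s2 \<in> I\<close>] unfolding xy abs_le_iff by linarith
  qed
  finally show ?thesis using D by simp
qed simp

lemma partial_diam_le_box_witness:
  assumes "mm_space X" "mm_space Y" "box_witness X Y \<epsilon> \<phi> \<psi> I"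
  shows "partial_diam X s \<le> partial_diam Y (s + \<epsilon>) + ereal \<epsilon>"
proof -
  obtain dX \<mu>X dY \<mu>Y where XY: "X = (dX, \<mu>X)" "Y = (dY, \<mu>Y)" by (cases X, cases Y)
  define \<A> where "\<A> = {A. A \<in> sets \<mu>Y \<and> s + \<epsilon> \<le> measure \<mu>Y A}"
  have Y_eq: "partial_diam Y (s + \<epsilon>) = (INF A\<in>\<A>. mm_diam Y A)"
    unfolding partial_diam_def \<A>_def XY by simp
  show ?thesis
  proof (cases "\<A> = {}")
    case False
    have "partial_diam X s \<le> (INF A\<in>\<A>. mm_diam Y A + ereal \<epsilon>)"
      using assms partial_diam_le_mm_diam_box_witness unfolding XY \<A>_def by (intro INF_greatest) auto
    also have "\<dots> = (INF A\<in>\<A>. mm_diam Y A) + ereal \<epsilon>"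
      using False mm_diam_nonneg[of "space \<mu>Y" dY] assms(2)
      unfolding XY mm_space_def by (intro INF_ereal_add_left) auto
    finally show ?thesis unfolding Y_eq .
  qed (simp add: Y_eq top_ereal_def)
qed

lemma eventually_partial_diam_close:
  assumes X: "mm_space X" and Y: "\<And>n. mm_space (Y n)"
    and lim: "(\<lambda>n. box_dist (Y n) X) \<longlonglongrightarrow> 0" and "0 < \<delta>"
  shows "\<forall>\<^sub>F n in sequentially. \<forall>s.
           partial_diam (Y n) s \<le> partial_diam X (s + \<delta>) + ereal \<delta> \<and>
           partial_diam X s \<le> partial_diam (Y n) (s + \<delta>) + ereal \<delta>"
  using order_tendstoD(2)[OF lim \<open>0 < \<delta>\<close>]
proof eventually_elim
  case (elim n)
  then obtain \<epsilon> \<phi> \<psi> I where "\<epsilon> < \<delta>" and w: "box_witness (Y n) X \<epsilon> \<phi> \<psi> I"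
    using box_witness_less[OF Y X] by blast
  have shift: "partial_diam Z (s + \<epsilon>) + ereal \<epsilon> \<le> partial_diam Z (s + \<delta>) + ereal \<delta>" for Z :: "'c mmspace" and s
    using \<open>\<epsilon> < \<delta>\<close> by (intro add_mono partial_diam_mono) auto
  show ?case
    using order.trans[OF partial_diam_le_box_witness[OF Y X w] shift]
      order.trans[OF partial_diam_le_box_witness[OF X Y box_witness_commute[OF w]] shift]
    by blast
qed

theorem lemma3p8:
  fixes \<Delta> :: real and X :: "'a mmspace" and Y :: "nat \<Rightarrow> 'b mmspace"
  assumes "0 < \<Delta>" and "\<Delta> < 1"
    and "mm_space_Delta \<Delta> X"
    and "\<And>n. mm_space_Delta \<Delta> (Y n)"
    and "(\<lambda>n. box_dist (Y n) X) \<longlonglongrightarrow> 0"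
  shows "(\<lambda>n. r_Delta \<Delta> (Y n)) \<longlonglongrightarrow> r_Delta \<Delta> X"
proof -
  have X: "mm_space X" and Y: "\<And>n. mm_space (Y n)"
    using assms(3,4) by (auto simp: mm_space_Delta_def)
  have "(\<lambda>n. LBINT s=0..(\<Delta> + 1) / 2. real_of_ereal (partial_diam (Y n) s)) \<longlonglongrightarrow>
        (LBINT s=0..(\<Delta> + 1) / 2. real_of_ereal (partial_diam X s))"
  proof (rule tendsto_interval_integral_of_shifted_bounds)
    show "0 \<le> (\<Delta> + 1) / 2" "(\<Delta> + 1) / 2 < 1" using assms(1,2) by auto
    show "mono_on {..<1} (\<lambda>s. real_of_ereal (partial_diam (Y n) s))" for n
      by (rule mono_on_real_of_partial_diam[OF Y])
    show "mono_on {..<1} (\<lambda>s. real_of_ereal (partial_diam X s))"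
      by (rule mono_on_real_of_partial_diam[OF X])
    show "\<forall>\<^sub>F n in sequentially. \<forall>s. s + \<delta> < 1 \<longrightarrow>
            real_of_ereal (partial_diam (Y n) s) \<le> real_of_ereal (partial_diam X (s + \<delta>)) + \<delta> \<and>
            real_of_ereal (partial_diam X s) \<le> real_of_ereal (partial_diam (Y n) (s + \<delta>)) + \<delta>"
      if "0 < \<delta>" for \<delta>
      using eventually_partial_diam_close[OF X Y assms(5) that]
      by (rule eventually_mono) (blast intro: real_of_partial_diam_le X Y)
  qed
  then show ?thesis unfolding r_Delta_def .
qed

end
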